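(* The orbit space $G_{4,2}(\mathbb{R})/\mathbb{Z}_2^4$ is homeomorphic to the sphere $S^4$.
   Context: $G_{4,2}(\mathbb{R})$ is the real Grassmann manifold of $2$-planes in $\mathbb{R}^4$, with the action of $\mathbb{Z}_2^4=\{\pm1\}^4$ induced from coordinatewise sign changes $(\epsilon_1,\dots,\epsilon_4)\cdot(v_1,\dots,v_4)=(\epsilon_1v_1,\dots,\epsilon_4v_4)$ on $\mathbb{R}^4$. *)

theory Defs
  imports "HOL-Analysis.Analysis"
begin

definition quotient_topology :: "'a topology \<Rightarrow> ('a \<Rightarrow> 'b) \<Rightarrow> 'b topology" where
  "quotient_topology X f =
     topology (\<lambda>U. U \<subseteq> f ` topspace X \<and> openin X {x \<in> topspace X. f x \<in> U})"

lemma istopology_quotient: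
  "istopology (\<lambda>U. U \<subseteq> f ` topspace X \<and> openin X {x \<in> topspace X. f x \<in> U})"
proof -
  have int: "{x \<in> topspace X. f x \<in> S \<inter> T} =
             {x \<in> topspace X. f x \<in> S} \<inter> {x \<in> topspace X. f x \<in> T}" for S T
    by auto
  have un: "{x \<in> topspace X. f x \<in> \<Union>K} = \<Union>((\<lambda>U. {x \<in> topspace X. f x \<in> U}) ` K)" for K
    by auto
  show ?thesis
    unfolding istopology_def
  proof (rule conjI; intro allI impI)
    fix S T
    assume "S \<subseteq> f ` topspace X \<and> openin X {x \<in> topspace X. f x \<in> S}"
       and "T \<subseteq> f ` topspace X \<and> openin X {x \<in> topspace X. f x \<in> T}"
    then show "S \<inter> T \<subseteq> f ` topspace X \<and> openin X {x \<in> topspace X. f x \<in> S \<inter> T}"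
      unfolding int by (auto intro: openin_Int)
  next
    fix K
    assume "\<forall>U\<in>K. U \<subseteq> f ` topspace X \<and> openin X {x \<in> topspace X. f x \<in> U}"
    then show "\<Union>K \<subseteq> f ` topspace X \<and> openin X {x \<in> topspace X. f x \<in> \<Union>K}"
      unfolding un by (auto intro!: openin_Union)
  qed
qed

lemma openin_quotient_topology:
  "openin (quotient_topology X f) U \<longleftrightarrow>
     U \<subseteq> f ` topspace X \<and> openin X {x \<in> topspace X. f x \<in> U}"
  unfolding quotient_topology_def
  using istopology_quotient[of f X] by (simp add: topology_inverse')

definition orbit :: "'g set \<Rightarrow> ('g \<Rightarrow> 'a \<Rightarrow> 'a) \<Rightarrow> 'a \<Rightarrow> 'a set" where
  "orbit Grp act x = (\<lambda>g. act g x) ` Grp"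

definition orbit_space :: "'a topology \<Rightarrow> 'g set \<Rightarrow> ('g \<Rightarrow> 'a \<Rightarrow> 'a) \<Rightarrow> 'a set topology" where
  "orbit_space X Grp act = quotient_topology X (orbit Grp act)"

text \<open>The real Grassmannian \<open>G_{4,2}(\<real>)\<close>, realised (as usual) as the set of orthogonal
  projection matrices of rank 2 on \<open>\<real>^4\<close>, with the subspace topology from \<open>\<real>^{4\<times>4}\<close>.\<close>
definition grassmann42 :: "(real^4^4) set" where
  "grassmann42 = {P. transpose P = P \<and> P ** P = P \<and> rank P = 2}"

definition G42 :: "(real^4^4) topology" where
  "G42 = top_of_set grassmann42"

text \<open>The group \<open>\<int>_2^4 = {\<plusminus>1}^4\<close> and its action: the sign change
  \<open>D_\<epsilon> = diag(\<epsilon>\<^sub>1,\<dots>,\<epsilon>\<^sub>4)\<close> maps the plane \<open>V\<close> to \<open>D_\<epsilon> V\<close>, whose orthogonal projection is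
  \<open>D_\<epsilon> P D_\<epsilon>\<^sup>-\<^sup>1 = D_\<epsilon> P D_\<epsilon>\<close>.\<close>
definition signs4 :: "(real^4) set" where
  "signs4 = {e. \<forall>i. e $ i = 1 \<or> e $ i = -1}"

definition diag4 :: "real^4 \<Rightarrow> real^4^4" where
  "diag4 e = (\<chi> i j. if i = j then e $ i else 0)"

definition sign_act :: "real^4 \<Rightarrow> real^4^4 \<Rightarrow> real^4^4" where
  "sign_act e P = diag4 e ** P ** diag4 e"

end

theory Submission
  imports Defs
begin

(*
  A 2-plane in R^4 is described, up to a common sign, by its Pluecker coordinates, which we group
  into pairs of complementary coordinates (x_k, y_k) = (p12, p34), (p13, p42), (p14, p23);
  they satisfy sum x_k^2 + y_k^2 = 1 and the Pluecker relation sum x_k y_k = 0.  A sign change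
  multiplies x_k and y_k by two sign products whose product is e = e1 e2 e3 e4, so
  b_k = 2 (x_k^2 - y_k^2) is invariant while a_k = 4 x_k y_k changes by e.  Since
  a_1 + a_2 + a_3 = 0, the point (Re, Im of (a_1 + i a_2)^2, b_1, b_2, b_3) of R^5 is a complete
  invariant: it determines the scale through sum_k |(a_k, b_k)| = 2 and each pair (x_k, y_k) up
  to sign from (a_k, b_k).  Normalised, it gives a continuous map from the Grassmannian onto S^4
  (onto by the intermediate value theorem applied to the scale) whose fibres are the orbits, and
  compactness turns the induced bijection into a homeomorphism.
*)

section \<open>Quotients of compact spaces\<close>

lemma topspace_quotient_topology: "topspace (quotient_topology X q) = q ` topspace X"
proof -
  have "{x \<in> topspace X. q x \<in> q ` topspace X} = topspace X"
    by auto
  then have "openin (quotient_topology X q) (q ` topspace X)"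
    unfolding openin_quotient_topology by auto
  moreover have "U \<subseteq> q ` topspace X" if "openin (quotient_topology X q) U" for U
    using that unfolding openin_quotient_topology by auto
  ultimately show ?thesis
    unfolding topspace_def by blast
qed

lemma continuous_map_quotient_topology: "continuous_map X (quotient_topology X q) q"
  unfolding continuous_map_def topspace_quotient_topology openin_quotient_topology by auto

lemma continuous_map_quotient_topology_factor:
  assumes f: "continuous_map X Y f" and hq: "\<And>x. x \<in> topspace X \<Longrightarrow> h (q x) = f x"
  shows "continuous_map (quotient_topology X q) Y h"
  unfolding continuous_map_def topspace_quotient_topology
proof (intro conjI allI impI)
  show "h \<in> q ` topspace X \<rightarrow> topspace Y"
    using f hq by (auto simp: continuous_map_def)
next
  fix U
  assume "openin Y U"
  have "q x \<in> {W \<in> q ` topspace X. h W \<in> U} \<longleftrightarrow> f x \<in> U" if "x \<in> topspace X" for x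
    using that hq[OF that] by auto
  then have "{x \<in> topspace X. q x \<in> {W \<in> q ` topspace X. h W \<in> U}} = {x \<in> topspace X. f x \<in> U}"
    by auto
  moreover have "openin X {x \<in> topspace X. f x \<in> U}"
    using f \<open>openin Y U\<close> by (simp add: continuous_map_def)
  ultimately show "openin (quotient_topology X q) {W \<in> q ` topspace X. h W \<in> U}"
    unfolding openin_quotient_topology by auto
qed

lemma quotient_topology_homeomorphic_space:
  assumes "compact_space X" and "Hausdorff_space Y" and f: "continuous_map X Y f"
    and surj: "f ` topspace X = topspace Y"
    and fibres: "\<And>x y. x \<in> topspace X \<Longrightarrow> y \<in> topspace X \<Longrightarrow> f x = f y \<longleftrightarrow> q x = q y"
  shows "quotient_topology X q homeomorphic_space Y"
proof -
  let ?Q = "quotient_topology X q"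
  define h where "h = f \<circ> inv_into (topspace X) q"
  have hq: "h (q x) = f x" if "x \<in> topspace X" for x
  proof -
    have "inv_into (topspace X) q (q x) \<in> topspace X" "q (inv_into (topspace X) q (q x)) = q x"
      using that by (auto intro: inv_into_into f_inv_into_f)
    then show ?thesis
      using fibres that by (simp add: h_def)
  qed
  have cont: "continuous_map ?Q Y h"
    using f hq by (rule continuous_map_quotient_topology_factor)
  have "compact_space ?Q"
    using \<open>compact_space X\<close> image_compactin[OF _ continuous_map_quotient_topology]
    unfolding compact_space_def topspace_quotient_topology by blast
  then have "closed_map ?Q Y h"
    using cont \<open>Hausdorff_space Y\<close> by (intro continuous_imp_closed_map)
  moreover have "h ` topspace ?Q = topspace Y"
    unfolding topspace_quotient_topology using hq surj by (auto simp: image_image)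
  moreover have "inj_on h (topspace ?Q)"
    unfolding topspace_quotient_topology inj_on_def using hq fibres by auto
  ultimately have "homeomorphic_map ?Q Y h"
    using cont bijective_closed_imp_homeomorphic_map by blast
  then show ?thesis
    by (rule homeomorphic_map_imp_homeomorphic_space)
qed

section \<open>Orthogonal projections\<close>

lemma span_orthonormal_expansion:
  fixes z :: "'a::euclidean_space"
  assumes "finite B" "pairwise orthogonal B" "\<And>b. b \<in> B \<Longrightarrow> norm b = 1" "z \<in> span B"
  shows "z = (\<Sum>b\<in>B. (b \<bullet> z) *\<^sub>R b)"
proof -
  define w where "w = z - (\<Sum>b\<in>B. (b \<bullet> z) *\<^sub>R b)"
  have "w \<in> span B"
    unfolding w_def by (intro span_diff[OF assms(4)] span_sum span_mul span_base)
  moreover have "orthogonal w c" if "c \<in> B" for c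
  proof -
    have orthonormal: "c \<bullet> b = (if b = c then 1 else 0)" if "b \<in> B" for b
      using assms(2,3) \<open>c \<in> B\<close> that
      by (auto simp: pairwise_def orthogonal_def dot_square_norm)
    have "c \<bullet> (\<Sum>b\<in>B. (b \<bullet> z) *\<^sub>R b) = (\<Sum>b\<in>B. (b \<bullet> z) * (c \<bullet> b))"
      by (simp add: inner_sum_right)
    also have "\<dots> = (\<Sum>b\<in>B. if b = c then c \<bullet> z else 0)"
      by (intro sum.cong refl) (simp add: orthonormal)
    also have "\<dots> = c \<bullet> z"
      using assms(1) \<open>c \<in> B\<close> by simp
    finally show ?thesis
      by (simp add: w_def orthogonal_def inner_diff_right inner_commute)
  qed
  ultimately have "orthogonal w w"
    by (rule orthogonal_to_span)
  then show ?thesis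
    by (simp add: w_def orthogonal_def)
qed

lemma symmetric_idempotent_matrix_entries:
  fixes P :: "real^'n^'n"
  assumes sym: "transpose P = P" and idem: "P ** P = P"
  obtains B where "finite B" "pairwise orthogonal B" "\<And>b. b \<in> B \<Longrightarrow> norm b = 1"
    "card B = rank P" "\<And>i j. P $ i $ j = (\<Sum>b\<in>B. b $ i * b $ j)"
proof -
  let ?S = "range (\<lambda>x. P *v x)"
  have "subspace ?S"
    by (intro linear_subspace_image matrix_vector_mul_linear subspace_UNIV)
  then obtain B where BS: "B \<subseteq> ?S" and orth: "pairwise orthogonal B"
    and unit: "\<And>b. b \<in> B \<Longrightarrow> norm b = 1" and "independent B"
    and card_B: "card B = dim ?S" and span: "span B = ?S"
    using orthonormal_basis_subspace by metis
  then have "finite B"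
    using independent_imp_finite by blast
  have "b \<bullet> (P *v x) = b \<bullet> x" if "b \<in> B" for b x
  proof -
    from that BS obtain y where "b = P *v y" by auto
    then have "b v* P = b"
      by (metis sym idem matrix_vector_mul_assoc transpose_matrix_vector)
    then show ?thesis
      by (metis dot_lmul_matrix)
  qed
  then have expansion: "P *v x = (\<Sum>b\<in>B. (b \<bullet> x) *\<^sub>R b)" for x
    using span_orthonormal_expansion[OF \<open>finite B\<close> orth unit, of "P *v x"] span by simp
  have entries: "P $ i $ j = (\<Sum>b\<in>B. b $ i * b $ j)" for i j
  proof -
    have "P $ i $ j = (P *v axis j 1) $ i"
      by (simp add: matrix_vector_mult_basis column_def)
    also have "\<dots> = (\<Sum>b\<in>B. b $ i * b $ j)"
      unfolding expansion by (simp add: sum_component cart_eq_inner_axis[symmetric] mult.commute)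
    finally show ?thesis .
  qed
  show ?thesis
    by (rule that[OF \<open>finite B\<close> orth unit _ entries]) (unfold rank_dim_range, insert card_B, simp)
qed

lemma rank_eq_trace_if_symmetric_idempotent:
  fixes P :: "real^'n^'n"
  assumes "transpose P = P" and "P ** P = P"
  shows "real (rank P) = (\<Sum>i\<in>UNIV. P $ i $ i)"
proof -
  obtain B where unit: "\<And>b. b \<in> B \<Longrightarrow> norm b = 1" and card: "card B = rank P"
    and entries: "\<And>i j. P $ i $ j = (\<Sum>b\<in>B. b $ i * b $ j)"
    using symmetric_idempotent_matrix_entries[OF assms] by metis
  have "(\<Sum>i\<in>UNIV. P $ i $ i) = (\<Sum>b\<in>B. b \<bullet> b)"
    unfolding entries inner_vec_def inner_real_def by (rule sum.swap)
  also have "\<dots> = card B"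
    using unit by (simp add: dot_square_norm)
  finally show ?thesis
    using card by simp
qed

section \<open>Squaring in the plane\<close>

lemma ex_pair_squaring: "\<exists>x y :: real. 4 * x * y = a \<and> 2 * (x^2 - y^2) = b"
proof -
  define z where "z = csqrt (Complex (b / 2) (a / 2))"
  have "Re (z^2) = b / 2" "Im (z^2) = a / 2"
    by (simp_all add: z_def)
  then have "4 * Re z * Im z = a" "2 * ((Re z)^2 - (Im z)^2) = b"
    by (simp_all add: power2_eq_square algebra_simps)
  then show ?thesis
    by blast
qed

lemma sqrt_pair_squaring: "sqrt ((4 * x * y)^2 + (2 * (x^2 - y^2))^2) = 2 * (x^2 + y^2)"
proof -
  have "(4 * x * y)^2 + (2 * (x^2 - y^2))^2 = (2 * (x^2 + y^2))^2"
    by algebra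
  then show ?thesis
    by simp
qed

lemma pair_squaring_eq_cases:
  fixes x y u v :: real
  assumes "x^2 - y^2 = u^2 - v^2" and "x * y = u * v"
  shows "(x = u \<and> y = v) \<or> (x = -u \<and> y = -v)"
proof -
  have square: "(Complex p q)^2 = Complex (p^2 - q^2) (2 * p * q)" for p q
    by (simp add: complex_eq_iff power2_eq_square)
  have "(Complex x y)^2 = (Complex u v)^2"
    using assms by (simp add: square)
  then have "Complex x y = Complex u v \<or> Complex x y = - Complex u v"
    by (simp add: power2_eq_iff)
  then show ?thesis
    by (auto simp: complex_eq_iff)
qed

(* Multiplying the orbit coordinates by r^2 multiplies the odd coordinates by r and the even
   ones by r^2; on Pluecker pairs this sum equals 2 at r = 1, which fixes the scale. *)
definition dilated_norm_sum :: "'i set \<Rightarrow> ('i \<Rightarrow> real) \<Rightarrow> ('i \<Rightarrow> real) \<Rightarrow> real \<Rightarrow> real" where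
  "dilated_norm_sum I \<alpha> \<beta> r = (\<Sum>k\<in>I. sqrt ((r * \<alpha> k)^2 + (r^2 * \<beta> k)^2))"

lemma sqrt_dilation: "0 \<le> r \<Longrightarrow> sqrt ((r * a)^2 + (r^2 * b)^2) = r * sqrt (a^2 + r^2 * b^2)"
proof -
  assume "0 \<le> r"
  have "(r * a)^2 + (r^2 * b)^2 = r^2 * (a^2 + r^2 * b^2)"
    by algebra
  then show ?thesis
    using \<open>0 \<le> r\<close> by (simp add: real_sqrt_mult)
qed

lemma dilated_norm_sum_nonneg: "0 \<le> dilated_norm_sum I \<alpha> \<beta> r"
  by (simp add: dilated_norm_sum_def sum_nonneg)

lemma dilated_norm_sum_eq_0_iff:
  "finite I \<Longrightarrow> dilated_norm_sum I \<alpha> \<beta> 1 = 0 \<longleftrightarrow> (\<forall>k\<in>I. \<alpha> k = 0 \<and> \<beta> k = 0)"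
  by (simp add: dilated_norm_sum_def sum_nonneg_eq_0_iff sum_power2_eq_zero_iff)

lemma dilated_norm_sum_le:
  assumes "0 \<le> r" and "r \<le> 1"
  shows "dilated_norm_sum I \<alpha> \<beta> r \<le> r * dilated_norm_sum I \<alpha> \<beta> 1"
  unfolding dilated_norm_sum_def sum_distrib_left
proof (rule sum_mono)
  fix k
  have "r^2 * (\<beta> k)^2 \<le> (\<beta> k)^2"
    using assms by (intro mult_left_le_one_le) (auto simp: power_le_one)
  then show "sqrt ((r * \<alpha> k)^2 + (r^2 * \<beta> k)^2) \<le> r * sqrt ((1 * \<alpha> k)^2 + (1^2 * \<beta> k)^2)"
    using assms by (simp add: sqrt_dilation mult_left_mono)
qed

lemma dilated_norm_sum_ge:
  assumes "1 \<le> r"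
  shows "r * dilated_norm_sum I \<alpha> \<beta> 1 \<le> dilated_norm_sum I \<alpha> \<beta> r"
  unfolding dilated_norm_sum_def sum_distrib_left
proof (rule sum_mono)
  fix k
  have "(\<beta> k)^2 \<le> r^2 * (\<beta> k)^2"
    using assms by (intro mult_le_cancel_right1[THEN iffD2]) (auto simp: one_le_power)
  then show "r * sqrt ((1 * \<alpha> k)^2 + (1^2 * \<beta> k)^2) \<le> sqrt ((r * \<alpha> k)^2 + (r^2 * \<beta> k)^2)"
    using assms by (simp add: sqrt_dilation mult_left_mono)
qed

lemma dilated_norm_sum_eq_imp_eq_1:
  assumes "0 < dilated_norm_sum I \<alpha> \<beta> 1" and "0 < r"
    and "dilated_norm_sum I \<alpha> \<beta> r = dilated_norm_sum I \<alpha> \<beta> 1"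
  shows "r = 1"
proof (rule ccontr)
  assume "r \<noteq> 1"
  then consider "r < 1" | "1 < r"
    by linarith
  then show False
  proof cases
    case 1
    then show False
      using dilated_norm_sum_le[of r I \<alpha> \<beta>] assms by (simp add: mult_less_cancel_right1)
  next
    case 2
    then show False
      using dilated_norm_sum_ge[of r I \<alpha> \<beta>] assms by (simp add: mult_le_cancel_right1)
  qed
qed

lemma ex_dilated_norm_sum_eq:
  assumes pos: "0 < dilated_norm_sum I \<alpha> \<beta> 1" and "0 < c"
  obtains r where "0 < r" "dilated_norm_sum I \<alpha> \<beta> r = c"
proof -
  define R where "R = max 1 (c / dilated_norm_sum I \<alpha> \<beta> 1)"
  have "c \<le> R * dilated_norm_sum I \<alpha> \<beta> 1"
    using pos by (simp add: R_def field_simps max_def)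
  also have "\<dots> \<le> dilated_norm_sum I \<alpha> \<beta> R"
    by (rule dilated_norm_sum_ge) (simp add: R_def)
  finally have "c \<le> dilated_norm_sum I \<alpha> \<beta> R" .
  moreover have "continuous_on {0..R} (dilated_norm_sum I \<alpha> \<beta>)"
    unfolding dilated_norm_sum_def by (intro continuous_intros)
  moreover have "dilated_norm_sum I \<alpha> \<beta> 0 = 0" "0 \<le> R"
    by (simp_all add: dilated_norm_sum_def R_def)
  ultimately obtain r where "0 \<le> r" "dilated_norm_sum I \<alpha> \<beta> r = c"
    using IVT'[of "dilated_norm_sum I \<alpha> \<beta>" 0 c R] \<open>0 < c\<close> by auto
  moreover have "r \<noteq> 0"
    using \<open>dilated_norm_sum I \<alpha> \<beta> 0 = 0\<close> \<open>0 < c\<close> calculation by auto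
  ultimately show ?thesis
    by (intro that) auto
qed

section \<open>Pluecker coordinates\<close>

lemma grassmann42_eq_trace:
  "grassmann42 = {P. transpose P = P \<and> P ** P = P \<and> (\<Sum>i\<in>UNIV. P $ i $ i) = 2}"
proof -
  have "rank P = 2 \<longleftrightarrow> (\<Sum>i\<in>UNIV. P $ i $ i) = 2"
    if "transpose P = P" "P ** P = P" for P :: "real^4^4"
    by (simp flip: rank_eq_trace_if_symmetric_idempotent[OF that])
  then show ?thesis
    unfolding grassmann42_def by blast
qed

(* The orthogonal projection onto the plane with Pluecker coordinates p12 = x$1, p13 = x$2,
   p14 = x$3, p34 = y$1, p42 = y$2, p23 = y$3, provided (x, y) \<in> plucker_pairs. *)
definition plucker_proj :: "real^3 \<Rightarrow> real^3 \<Rightarrow> real^4^4" where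
  "plucker_proj x y = (\<chi> i j.
     if i = 1 then
       (if j = 1 then x$1^2 + x$2^2 + x$3^2 else if j = 2 then x$2 * y$3 - x$3 * y$2
        else if j = 3 then x$3 * y$1 - x$1 * y$3 else x$1 * y$2 - x$2 * y$1)
     else if i = 2 then
       (if j = 1 then x$2 * y$3 - x$3 * y$2 else if j = 2 then x$1^2 + y$2^2 + y$3^2
        else if j = 3 then x$1 * x$2 - y$1 * y$2 else x$1 * x$3 - y$1 * y$3)
     else if i = 3 then
       (if j = 1 then x$3 * y$1 - x$1 * y$3 else if j = 2 then x$1 * x$2 - y$1 * y$2
        else if j = 3 then x$2^2 + y$1^2 + y$3^2 else x$2 * x$3 - y$2 * y$3)
     else
       (if j = 1 then x$1 * y$2 - x$2 * y$1 else if j = 2 then x$1 * x$3 - y$1 * y$3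
        else if j = 3 then x$2 * x$3 - y$2 * y$3 else x$3^2 + y$1^2 + y$2^2))"

definition plucker_pairs :: "((real^3) \<times> (real^3)) set" where
  "plucker_pairs = {(x, y). x \<bullet> x + y \<bullet> y = 1 \<and> x \<bullet> y = 0}"

lemma plucker_pairs_iff:
  "(x, y) \<in> plucker_pairs \<longleftrightarrow>
     x$1^2 + x$2^2 + x$3^2 + y$1^2 + y$2^2 + y$3^2 = 1 \<and> x$1 * y$1 + x$2 * y$2 + x$3 * y$3 = 0"
  by (simp add: plucker_pairs_def inner_vec_def sum_3 power2_eq_square add.assoc)

lemma plucker_proj_squared:
  "plucker_proj x y ** plucker_proj x y =
     (x \<bullet> x + y \<bullet> y) *\<^sub>R plucker_proj x y - (x \<bullet> y)^2 *\<^sub>R mat 1"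
  unfolding plucker_proj_def matrix_matrix_mult_def
  by (simp add: vec_eq_iff forall_4 sum_4 mat_def inner_vec_def sum_3) (intro conjI; algebra)

lemma plucker_proj_scaleR: "plucker_proj (c *\<^sub>R x) (c *\<^sub>R y) = c^2 *\<^sub>R plucker_proj x y"
  unfolding plucker_proj_def
  by (simp add: vec_eq_iff forall_4) (intro conjI; algebra)

lemma plucker_proj_in_grassmann42:
  assumes "(x, y) \<in> plucker_pairs"
  shows "plucker_proj x y \<in> grassmann42"
  unfolding grassmann42_eq_trace
proof (intro CollectI conjI)
  show "transpose (plucker_proj x y) = plucker_proj x y"
    by (simp add: plucker_proj_def transpose_def vec_eq_iff forall_4)
  show "plucker_proj x y ** plucker_proj x y = plucker_proj x y"
    using assms by (simp add: plucker_proj_squared plucker_pairs_def)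
  show "(\<Sum>i\<in>UNIV. plucker_proj x y $ i $ i) = 2"
    using assms unfolding plucker_pairs_iff by (simp add: plucker_proj_def sum_4)
qed

lemma orthonormal_pair_plucker_proj:
  fixes u v :: "real^4"
  assumes "u \<bullet> u = 1" "v \<bullet> v = 1" "u \<bullet> v = 0"
  defines "x \<equiv> vector [u$1 * v$2 - u$2 * v$1, u$1 * v$3 - u$3 * v$1, u$1 * v$4 - u$4 * v$1]"
    and "y \<equiv> vector [u$3 * v$4 - u$4 * v$3, u$4 * v$2 - u$2 * v$4, u$2 * v$3 - u$3 * v$2]"
  shows "(x, y) \<in> plucker_pairs" "(\<chi> i j. u$i * u$j + v$i * v$j) = plucker_proj x y"
proof -
  have unit: "u$1 * u$1 + u$2 * u$2 + u$3 * u$3 + u$4 * u$4 = 1"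
    "v$1 * v$1 + v$2 * v$2 + v$3 * v$3 + v$4 * v$4 = 1"
    and orth: "u$1 * v$1 + u$2 * v$2 + u$3 * v$3 + u$4 * v$4 = 0"
    using assms(1-3) by (simp_all add: inner_vec_def sum_4)
  show "(x, y) \<in> plucker_pairs"
    unfolding plucker_pairs_iff x_def y_def
    apply simp
    apply (intro conjI)
    using unit orth apply algebra
    apply algebra
    done
  show "(\<chi> i j. u$i * u$j + v$i * v$j) = plucker_proj x y"
    unfolding plucker_proj_def x_def y_def
    apply (simp add: vec_eq_iff forall_4)
    apply (intro conjI)
    using unit orth by algebra+
qed

lemma grassmann42_eq_plucker_image: "grassmann42 = (\<lambda>(x, y). plucker_proj x y) ` plucker_pairs"
proof
  show "(\<lambda>(x, y). plucker_proj x y) ` plucker_pairs \<subseteq> grassmann42"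
    using plucker_proj_in_grassmann42 by auto
  show "grassmann42 \<subseteq> (\<lambda>(x, y). plucker_proj x y) ` plucker_pairs"
  proof
    fix P
    assume "P \<in> grassmann42"
    then have sym: "transpose P = P" and idem: "P ** P = P" and rank: "rank P = 2"
      by (auto simp: grassmann42_def)
    obtain B where "finite B" and orth: "pairwise orthogonal B"
      and unit: "\<And>b. b \<in> B \<Longrightarrow> norm b = 1" and card_B: "card B = rank P"
      and entries: "\<And>i j. P $ i $ j = (\<Sum>b\<in>B. b $ i * b $ j)"
      by (rule symmetric_idempotent_matrix_entries[OF sym idem]) blast
    have "card B = 2"
      using card_B rank by simp
    then obtain u v where B: "B = {u, v}" "u \<noteq> v"
      by (meson card_2_iff)
    have "u \<bullet> u = 1" "v \<bullet> v = 1"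
      using unit B by (simp_all add: dot_square_norm)
    moreover have "u \<bullet> v = 0"
      using orth B by (simp add: pairwise_def orthogonal_def)
    ultimately obtain x y where "(x, y) \<in> plucker_pairs"
      and "(\<chi> i j. u$i * u$j + v$i * v$j) = plucker_proj x y"
      using orthonormal_pair_plucker_proj by blast
    moreover have "P = (\<chi> i j. u$i * u$j + v$i * v$j)"
      using B by (simp add: vec_eq_iff entries)
    ultimately show "P \<in> (\<lambda>(x, y). plucker_proj x y) ` plucker_pairs"
      by (auto intro: image_eqI[where x = "(x, y)"])
  qed
qed

lemma compact_plucker_pairs: "compact plucker_pairs"
proof -
  have eq: "plucker_pairs = {p. fst p \<bullet> fst p + snd p \<bullet> snd p = 1} \<inter> {p. fst p \<bullet> snd p = 0}"
    by (auto simp: plucker_pairs_def)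
  have "closed plucker_pairs"
    unfolding eq by (intro closed_Int closed_Collect_eq continuous_intros)
  moreover have "norm p = 1" if "p \<in> plucker_pairs" for p
    using that by (auto simp: plucker_pairs_def norm_Pair power2_norm_eq_inner)
  then have "bounded plucker_pairs"
    by (auto simp: bounded_iff)
  ultimately show ?thesis
    by (simp add: compact_eq_bounded_closed)
qed

lemma continuous_on_plucker_proj: "continuous_on S (\<lambda>(x, y). plucker_proj x y)"
  unfolding case_prod_unfold plucker_proj_def
  apply (intro continuous_on_vec_lambda)
  subgoal for i j
    using exhaust_4[of i] exhaust_4[of j] by (auto intro!: continuous_intros)
  done

lemma compact_grassmann42: "compact grassmann42"
  unfolding grassmann42_eq_plucker_image
  by (intro compact_continuous_image compact_plucker_pairs continuous_on_plucker_proj)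

section \<open>The sign action\<close>

lemma sign_act_entry: "sign_act s P $ i $ j = s$i * P$i$j * s$j"
proof -
  have "(\<Sum>k\<in>UNIV. (if i = k then s$i else 0) * P$k$j) = s$i * P$i$j"
    by (simp add: if_distrib[of "\<lambda>a. a * _"] cong: if_cong)
  then show ?thesis
    by (simp add: sign_act_def diag4_def matrix_matrix_mult_def if_distrib[of "\<lambda>a. _ * a"]
        sum.delta cong: if_cong)
qed

lemma sign_act_sign_act: "sign_act g (sign_act s P) = sign_act (g * s) P"
  by (simp add: vec_eq_iff sign_act_entry algebra_simps)

lemma orbit_sign_act_eq_iff:
  "orbit signs4 sign_act P = orbit signs4 sign_act Q \<longleftrightarrow> (\<exists>s\<in>signs4. Q = sign_act s P)"
proof
  have "1 \<in> signs4" "sign_act 1 Q = Q"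
    by (simp_all add: signs4_def vec_eq_iff sign_act_entry)
  then have "Q \<in> orbit signs4 sign_act Q"
    unfolding orbit_def by force
  moreover assume "orbit signs4 sign_act P = orbit signs4 sign_act Q"
  ultimately show "\<exists>s\<in>signs4. Q = sign_act s P"
    by (auto simp: orbit_def)
next
  assume "\<exists>s\<in>signs4. Q = sign_act s P"
  then obtain s where s: "s \<in> signs4" and Q: "Q = sign_act s P"
    by blast
  have mult: "g * s \<in> signs4 \<and> (g * s) * s = g" if "g \<in> signs4" for g
  proof -
    have "g$i * s$i \<in> {1, -1} \<and> g$i * s$i * s$i = g$i" for i
    proof -
      have "g$i = 1 \<or> g$i = -1" "s$i = 1 \<or> s$i = -1"
        using that s by (simp_all add: signs4_def)
      then show ?thesis
        by auto
    qed
    then show ?thesis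
      by (simp add: signs4_def vec_eq_iff)
  qed
  have shift: "(\<lambda>g. g * s) ` signs4 = signs4"
  proof (intro subset_antisym subsetI)
    fix g
    assume "g \<in> signs4"
    with mult have "g = (g * s) * s" "g * s \<in> signs4"
      by auto
    then show "g \<in> (\<lambda>g. g * s) ` signs4"
      by (rule image_eqI)
  qed (use mult in auto)
  have "orbit signs4 sign_act Q = (\<lambda>g. sign_act g P) ` ((\<lambda>g. g * s) ` signs4)"
    by (simp add: orbit_def Q sign_act_sign_act image_image)
  then show "orbit signs4 sign_act P = orbit signs4 sign_act Q"
    by (simp add: shift orbit_def)
qed

lemma sign_act_plucker_proj:
  assumes "s \<in> signs4"
  shows "sign_act s (plucker_proj x y) =
    plucker_proj (vector [s$1 * s$2 * x$1, s$1 * s$3 * x$2, s$1 * s$4 * x$3])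
                 (vector [s$3 * s$4 * y$1, s$4 * s$2 * y$2, s$2 * s$3 * y$3])"
proof -
  have "s$1 * s$1 = 1" "s$2 * s$2 = 1" "s$3 * s$3 = 1" "s$4 * s$4 = 1"
    using assms by (auto simp: signs4_def forall_4)
  then show ?thesis
    by (simp add: vec_eq_iff forall_4 sign_act_entry plucker_proj_def, intro conjI; algebra)
qed

lemma plucker_proj_sign_related:
  assumes "h \<in> {1, -1}" and "\<forall>k. \<rho>$k \<in> {1, -1}"
  shows "\<exists>s\<in>signs4. plucker_proj (\<chi> k. \<rho>$k * x$k) (\<chi> k. h * \<rho>$k * y$k) = sign_act s (plucker_proj x y)"
proof -
  define g where "g = h * \<rho>$1 * \<rho>$2 * \<rho>$3"
  define s :: "real^4" where "s = (\<chi> i. if i = 1 then g else if i = 2 then \<rho>$1 else if i = 3 then \<rho>$2 else \<rho>$3)"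
  have signs: "h * h = 1" "\<rho>$1 * \<rho>$1 = 1" "\<rho>$2 * \<rho>$2 = 1" "\<rho>$3 * \<rho>$3 = 1"
    using assms by (auto simp: forall_3)
  then have "g * g = 1"
    unfolding g_def by algebra
  then have "s \<in> signs4"
    using assms by (auto simp: signs4_def s_def forall_4 forall_3 square_eq_1_iff)
  moreover have "vector [s$1 * s$2 * x$1, s$1 * s$3 * x$2, s$1 * s$4 * x$3] = g *\<^sub>R (\<chi> k. \<rho>$k * x$k)"
    by (simp add: s_def vec_eq_iff forall_3)
  moreover have "vector [s$3 * s$4 * y$1, s$4 * s$2 * y$2, s$2 * s$3 * y$3] =
      g *\<^sub>R (\<chi> k. h * \<rho>$k * y$k)"
    using assms by (auto simp: s_def g_def vec_eq_iff forall_3)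
  ultimately have "sign_act s (plucker_proj x y) =
      plucker_proj (g *\<^sub>R (\<chi> k. \<rho>$k * x$k)) (g *\<^sub>R (\<chi> k. h * \<rho>$k * y$k))"
    by (simp add: sign_act_plucker_proj)
  also have "\<dots> = plucker_proj (\<chi> k. \<rho>$k * x$k) (\<chi> k. h * \<rho>$k * y$k)"
    using \<open>g * g = 1\<close> by (simp add: plucker_proj_scaleR power2_eq_square)
  finally show ?thesis
    using \<open>s \<in> signs4\<close> by metis
qed

section \<open>A complete invariant of Pluecker pairs\<close>

definition odd_coords :: "real^3 \<Rightarrow> real^3 \<Rightarrow> real^3" where
  "odd_coords x y = (\<chi> k. 4 * x$k * y$k)"

definition even_coords :: "real^3 \<Rightarrow> real^3 \<Rightarrow> real^3" where
  "even_coords x y = (\<chi> k. 2 * ((x$k)^2 - (y$k)^2))"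

lemma sum_odd_coords: "odd_coords x y $ 1 + odd_coords x y $ 2 + odd_coords x y $ 3 = 4 * (x \<bullet> y)"
  by (simp add: odd_coords_def inner_vec_def sum_3 algebra_simps)

lemma dilated_norm_sum_odd_even_coords:
  "dilated_norm_sum UNIV (($) (odd_coords x y)) (($) (even_coords x y)) 1 = 2 * (x \<bullet> x + y \<bullet> y)"
proof -
  have "sqrt ((odd_coords x y $ k)^2 + (even_coords x y $ k)^2) = 2 * ((x$k)^2 + (y$k)^2)" for k
    unfolding odd_coords_def even_coords_def by (simp only: vec_lambda_beta sqrt_pair_squaring)
  then show ?thesis
    by (simp add: dilated_norm_sum_def inner_vec_def sum_3 power2_eq_square algebra_simps)
qed

lemma plucker_pairs_coords:
  assumes "(x, y) \<in> plucker_pairs"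
  shows "odd_coords x y $ 1 + odd_coords x y $ 2 + odd_coords x y $ 3 = 0"
    and "dilated_norm_sum UNIV (($) (odd_coords x y)) (($) (even_coords x y)) 1 = 2"
  using assms by (simp_all add: sum_odd_coords dilated_norm_sum_odd_even_coords plucker_pairs_def)

lemma ex_odd_even_coords: "\<exists>x y. odd_coords x y = a \<and> even_coords x y = b"
proof -
  have "\<exists>p. 4 * fst p * snd p = a$k \<and> 2 * ((fst p)^2 - (snd p)^2) = b$k" for k
  proof -
    obtain u v where "4 * u * v = a$k" "2 * (u^2 - v^2) = b$k"
      using ex_pair_squaring by blast
    then show ?thesis
      by (intro exI[of _ "(u, v)"]) simp
  qed
  then have "\<forall>k. \<exists>p. 4 * fst p * snd p = a$k \<and> 2 * ((fst p)^2 - (snd p)^2) = b$k"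
    by blast
  from choice[OF this] obtain f where
    f: "\<forall>k. 4 * fst (f k) * snd (f k) = a$k \<and> 2 * ((fst (f k))^2 - (snd (f k))^2) = b$k"
    by blast
  have "odd_coords (\<chi> k. fst (f k)) (\<chi> k. snd (f k)) = a"
    "even_coords (\<chi> k. fst (f k)) (\<chi> k. snd (f k)) = b"
    unfolding odd_coords_def even_coords_def vec_eq_iff by (simp_all only: vec_lambda_beta f) simp_all
  then show ?thesis
    by blast
qed

(* (a$1^2 - a$2^2, 2 a$1 a$2) is the complex square (a$1 + i a$2)^2, which forgets the sign
   of a; a$3 is recovered from a$1 + a$2 + a$3 = 0. *)
definition square_coords :: "real^3 \<Rightarrow> real^3 \<Rightarrow> nat \<Rightarrow> real" where
  "square_coords a b k =
     (if k = 0 then (a$1)^2 - (a$2)^2 else if k = 1 then 2 * a$1 * a$2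
      else if k = 2 then b$1 else if k = 3 then b$2 else if k = 4 then b$3 else 0)"

lemma square_coords_scaled_cases:
  fixes a b a' b' :: "real^3"
  assumes sum: "a$1 + a$2 + a$3 = 0" and sum': "a'$1 + a'$2 + a'$3 = 0" and "0 \<le> t"
    and scaled: "\<And>k. square_coords a' b' k = t * square_coords a b k"
  obtains h where "h \<in> {1, -1}" "a' = (h * sqrt t) *\<^sub>R a" "b' = t *\<^sub>R b"
proof -
  define r where "r = sqrt t"
  have "r^2 = t"
    using \<open>0 \<le> t\<close> by (simp add: r_def)
  have "(a'$1)^2 - (a'$2)^2 = (r * a$1)^2 - (r * a$2)^2"
    using scaled[of 0] \<open>r^2 = t\<close> by (simp add: square_coords_def power_mult_distrib algebra_simps)
  moreover have "a'$1 * a'$2 = (r * a$1) * (r * a$2)"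
    using scaled[of 1] \<open>r^2 = t\<close> by (simp add: square_coords_def power2_eq_square algebra_simps)
  ultimately have "(a'$1 = r * a$1 \<and> a'$2 = r * a$2) \<or> (a'$1 = - (r * a$1) \<and> a'$2 = - (r * a$2))"
    by (rule pair_squaring_eq_cases)
  then have "\<exists>h\<in>{1, -1}. a'$1 = h * r * a$1 \<and> a'$2 = h * r * a$2"
    by auto
  then obtain h where h: "h \<in> {1, -1}" "a'$1 = h * r * a$1" "a'$2 = h * r * a$2"
    by blast
  have "a'$3 = - a'$1 - a'$2"
    using sum' by linarith
  also have "\<dots> = h * r * (- a$1 - a$2)"
    using h by (simp add: algebra_simps)
  also have "- a$1 - a$2 = a$3"
    using sum by linarith
  finally have "a'$3 = h * r * a$3" .
  with h have "a' = (h * sqrt t) *\<^sub>R a"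
    by (simp add: vec_eq_iff forall_3 r_def)
  moreover have "b' = t *\<^sub>R b"
    using scaled[of 2] scaled[of 3] scaled[of 4] by (simp add: vec_eq_iff forall_3 square_coords_def)
  ultimately show ?thesis
    using h(1) that by blast
qed

lemma pairs_sign_related_if_coords_eq:
  assumes h: "h \<in> {1, -1}"
    and odd: "odd_coords x' y' = h *\<^sub>R odd_coords x y" and even: "even_coords x' y' = even_coords x y"
  obtains \<rho> where "\<forall>k. \<rho>$k \<in> {1, -1}" "x' = (\<chi> k. \<rho>$k * x$k)" "y' = (\<chi> k. h * \<rho>$k * y$k)"
proof -
  have "\<exists>\<rho>. \<rho> \<in> {1, -1} \<and> x'$k = \<rho> * x$k \<and> y'$k = h * \<rho> * y$k" for k
  proof -
    have "(x'$k)^2 - (y'$k)^2 = (x$k)^2 - (h * y$k)^2"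
      using arg_cong[OF even, of "\<lambda>v. v $ k"] h by (auto simp: even_coords_def)
    moreover have "4 * x'$k * y'$k = h * (4 * x$k * y$k)"
      using arg_cong[OF odd, of "\<lambda>v. v $ k"] by (simp add: odd_coords_def)
    then have "x'$k * y'$k = x$k * (h * y$k)"
      by algebra
    ultimately have "(x'$k = x$k \<and> y'$k = h * y$k) \<or> (x'$k = - x$k \<and> y'$k = - (h * y$k))"
      by (rule pair_squaring_eq_cases)
    then show ?thesis
      by auto
  qed
  then have "\<forall>k. \<exists>\<rho>. \<rho> \<in> {1, -1} \<and> x'$k = \<rho> * x$k \<and> y'$k = h * \<rho> * y$k"
    by blast
  from choice[OF this] obtain f where f: "\<forall>k. f k \<in> {1, -1} \<and> x'$k = f k * x$k \<and> y'$k = h * f k * y$k"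
    by blast
  show thesis
    by (rule that[of "\<chi> k. f k"]) (use f in \<open>simp_all add: vec_eq_iff\<close>)
qed

lemma plucker_pairs_sign_related_if_coords_scaled:
  assumes xy: "(x, y) \<in> plucker_pairs" and xy': "(x', y') \<in> plucker_pairs" and "0 < t"
    and scaled: "\<And>k. square_coords (odd_coords x' y') (even_coords x' y') k =
                     t * square_coords (odd_coords x y) (even_coords x y) k"
  obtains h \<rho> where "h \<in> {1, -1}" "\<forall>k. \<rho>$k \<in> {1, -1}"
    "x' = (\<chi> k. \<rho>$k * x$k)" "y' = (\<chi> k. h * \<rho>$k * y$k)"
proof -
  note coords = plucker_pairs_coords[OF xy] and coords' = plucker_pairs_coords[OF xy']
  obtain h where h: "h \<in> {1, -1}" and odd: "odd_coords x' y' = (h * sqrt t) *\<^sub>R odd_coords x y"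
    and even: "even_coords x' y' = t *\<^sub>R even_coords x y"
    by (rule square_coords_scaled_cases[OF coords(1) coords'(1) less_imp_le[OF \<open>0 < t\<close>] scaled]) blast
  have "dilated_norm_sum UNIV (($) (odd_coords x y)) (($) (even_coords x y)) (sqrt t) =
      dilated_norm_sum UNIV (($) (odd_coords x' y')) (($) (even_coords x' y')) 1"
    unfolding dilated_norm_sum_def odd even using h \<open>0 < t\<close> by (auto simp: power_mult_distrib)
  then have "sqrt t = 1"
    using dilated_norm_sum_eq_imp_eq_1[of UNIV "($) (odd_coords x y)" "($) (even_coords x y)" "sqrt t"]
      coords(2) coords'(2) \<open>0 < t\<close> by simp
  then have "t = 1"
    by simp
  then have "odd_coords x' y' = h *\<^sub>R odd_coords x y" "even_coords x' y' = even_coords x y"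
    using odd even by simp_all
  then obtain \<rho> where "\<forall>k. \<rho>$k \<in> {1, -1}" "x' = (\<chi> k. \<rho>$k * x$k)" "y' = (\<chi> k. h * \<rho>$k * y$k)"
    by (rule pairs_sign_related_if_coords_eq[OF h]) blast
  then show ?thesis
    by (rule that[OF h])
qed

lemma square_coords_plucker_pairs_nonzero:
  assumes "(x, y) \<in> plucker_pairs"
  shows "0 < (\<Sum>k\<le>4. (square_coords (odd_coords x y) (even_coords x y) k)^2)"
proof (rule ccontr)
  let ?a = "odd_coords x y" and ?b = "even_coords x y"
  note coords = plucker_pairs_coords[OF assms]
  assume "\<not> ?thesis"
  then have "(\<Sum>k\<le>4. (square_coords ?a ?b k)^2) = 0"
    by (meson not_less order_antisym sum_nonneg zero_le_power2)
  then have zero: "square_coords ?a ?b k = 0" if "k \<le> 4" for k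
    using that by (simp add: sum_nonneg_eq_0_iff)
  have "(?a$1)^2 - (?a$2)^2 = 0^2 - 0^2" "?a$1 * ?a$2 = 0 * 0"
    using zero[of 0] zero[of 1] by (simp_all add: square_coords_def)
  then have "?a$1 = 0" "?a$2 = 0"
    using pair_squaring_eq_cases by fastforce+
  moreover have "?b$1 = 0" "?b$2 = 0" "?b$3 = 0"
    using zero[of 2] zero[of 3] zero[of 4] by (simp_all add: square_coords_def)
  moreover have "?a$3 = 0"
    using coords(1) calculation by simp
  ultimately show False
    using coords(2) by (simp add: dilated_norm_sum_def sum_3)
qed

lemma square_coords_plucker_pairs_onto:
  assumes unit: "(\<Sum>k\<le>4. (w k)^2) = 1"
  obtains x y t where "(x, y) \<in> plucker_pairs" "0 < t"
    "\<And>k. k \<le> 4 \<Longrightarrow> square_coords (odd_coords x y) (even_coords x y) k = t * w k"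
proof -
  obtain c1 c2 where c: "4 * c1 * c2 = 2 * w 1" "2 * (c1^2 - c2^2) = 2 * w 0"
    using ex_pair_squaring by blast
  define a :: "real^3" where "a = vector [c1, c2, - c1 - c2]"
  define b :: "real^3" where "b = vector [w 2, w 3, w 4]"
  have "dilated_norm_sum UNIV (($) a) (($) b) 1 \<noteq> 0"
  proof
    assume "dilated_norm_sum UNIV (($) a) (($) b) 1 = 0"
    then have zero: "a$k = 0 \<and> b$k = 0" for k
      by (simp add: dilated_norm_sum_eq_0_iff)
    have "c1 = 0" "c2 = 0" "w 2 = 0" "w 3 = 0" "w 4 = 0"
      using zero[of 1] zero[of 2] zero[of 3] by (simp_all add: a_def b_def)
    then show False
      using unit c by (simp add: numeral_eq_Suc atMost_Suc)
  qed
  then have "0 < dilated_norm_sum UNIV (($) a) (($) b) 1"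
    using dilated_norm_sum_nonneg by (simp add: order_less_le)
  then obtain r where "0 < r" and r: "dilated_norm_sum UNIV (($) a) (($) b) r = 2"
    using ex_dilated_norm_sum_eq by (metis zero_less_numeral)
  obtain x y where odd: "odd_coords x y = r *\<^sub>R a" and even: "even_coords x y = r^2 *\<^sub>R b"
    using ex_odd_even_coords by blast
  have "4 * (x \<bullet> y) = r * (a$1 + a$2 + a$3)"
    unfolding sum_odd_coords[symmetric] odd by (simp add: algebra_simps)
  then have "x \<bullet> y = 0"
    by (simp add: a_def)
  have "2 * (x \<bullet> x + y \<bullet> y) = dilated_norm_sum UNIV (($) a) (($) b) r"
    unfolding dilated_norm_sum_odd_even_coords[symmetric] odd even by (simp add: dilated_norm_sum_def)
  then have xy: "(x, y) \<in> plucker_pairs"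
    using r \<open>x \<bullet> y = 0\<close> by (simp add: plucker_pairs_def)
  have coords: "square_coords (odd_coords x y) (even_coords x y) k = r^2 * w k" if "k \<le> 4" for k
  proof -
    consider "k = 0" | "k = 1" | "k = 2" | "k = 3" | "k = 4"
      using \<open>k \<le> 4\<close> by linarith
    then show ?thesis
    proof cases
      case 1
      have "c1^2 - c2^2 = w 0"
        using c(2) by simp
      with 1 show ?thesis
        by (simp add: square_coords_def odd a_def power_mult_distrib flip: right_diff_distrib)
    next
      case 2
      then show ?thesis
        using c(1) by (simp add: square_coords_def odd a_def power2_eq_square algebra_simps)
    qed (simp_all add: square_coords_def even b_def)
  qed
  show ?thesis
    by (rule that[OF xy _ coords]) (use \<open>0 < r\<close> in simp)
qed

section \<open>The orbit map\<close>

(* Written in matrix entries, so that continuity on the Grassmannian is immediate. *)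
definition odd_inv :: "real^4^4 \<Rightarrow> real^3" where
  "odd_inv P = vector [4 * (P$1$3 * P$2$4 - P$1$4 * P$2$3), 4 * (P$1$4 * P$3$2 - P$1$2 * P$3$4),
                       4 * (P$1$2 * P$4$3 - P$1$3 * P$4$2)]"

definition even_inv :: "real^4^4 \<Rightarrow> real^3" where
  "even_inv P = vector [2 * (P$1$1 + P$2$2 - 1), 2 * (P$1$1 + P$3$3 - 1), 2 * (P$1$1 + P$4$4 - 1)]"

definition orbit_coords :: "real^4^4 \<Rightarrow> nat \<Rightarrow> real" where
  "orbit_coords P = square_coords (odd_inv P) (even_inv P)"

definition orbit_map :: "real^4^4 \<Rightarrow> nat \<Rightarrow> real" where
  "orbit_map P k = orbit_coords P k / sqrt (\<Sum>j\<le>4. (orbit_coords P j)^2)"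

lemma odd_inv_plucker_proj:
  assumes "(x, y) \<in> plucker_pairs"
  shows "odd_inv (plucker_proj x y) = odd_coords x y"
proof -
  have unit: "x$1^2 + x$2^2 + x$3^2 + y$1^2 + y$2^2 + y$3^2 = 1"
    and orth: "x$1 * y$1 + x$2 * y$2 + x$3 * y$3 = 0"
    using assms by (simp_all add: plucker_pairs_iff)
  show ?thesis
    unfolding odd_inv_def odd_coords_def plucker_proj_def
    apply (simp add: vec_eq_iff forall_3)
    apply (intro conjI)
    using unit orth by algebra+
qed

lemma even_inv_plucker_proj:
  assumes "(x, y) \<in> plucker_pairs"
  shows "even_inv (plucker_proj x y) = even_coords x y"
proof -
  have unit: "x$1^2 + x$2^2 + x$3^2 + y$1^2 + y$2^2 + y$3^2 = 1"
    using assms by (simp add: plucker_pairs_iff)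
  show ?thesis
    unfolding even_inv_def even_coords_def plucker_proj_def
    apply (simp add: vec_eq_iff forall_3)
    apply (intro conjI)
    using unit by algebra+
qed

lemma orbit_coords_plucker_proj:
  "(x, y) \<in> plucker_pairs \<Longrightarrow>
     orbit_coords (plucker_proj x y) = square_coords (odd_coords x y) (even_coords x y)"
  by (simp add: orbit_coords_def odd_inv_plucker_proj even_inv_plucker_proj)

lemma odd_inv_sign_act: "odd_inv (sign_act s P) = (s$1 * s$2 * s$3 * s$4) *\<^sub>R odd_inv P"
  by (simp add: odd_inv_def sign_act_entry vec_eq_iff forall_3 algebra_simps)

lemma even_inv_sign_act: "s \<in> signs4 \<Longrightarrow> even_inv (sign_act s P) = even_inv P"
  by (auto simp: even_inv_def sign_act_entry vec_eq_iff forall_3 signs4_def forall_4)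

lemma orbit_map_sign_act:
  assumes "s \<in> signs4"
  shows "orbit_map (sign_act s P) = orbit_map P"
proof -
  have "s$1 * s$2 * s$3 * s$4 \<in> {1, -1}"
    using assms by (auto simp: signs4_def forall_4)
  then have "orbit_coords (sign_act s P) = orbit_coords P"
    by (auto simp: orbit_coords_def odd_inv_sign_act even_inv_sign_act[OF assms] square_coords_def)
  then show ?thesis
    by (simp add: orbit_map_def fun_eq_iff)
qed

lemma orbit_coords_norm_pos:
  assumes "P \<in> grassmann42"
  shows "0 < sqrt (\<Sum>k\<le>4. (orbit_coords P k)^2)"
proof -
  obtain x y where "(x, y) \<in> plucker_pairs" "P = plucker_proj x y"
    using assms unfolding grassmann42_eq_plucker_image by auto
  then show ?thesis
    using square_coords_plucker_pairs_nonzero by (simp add: orbit_coords_plucker_proj)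
qed

lemma orbit_map_eq_imp_sign_related:
  assumes P: "P \<in> grassmann42" and Q: "Q \<in> grassmann42" and eq: "orbit_map P = orbit_map Q"
  shows "\<exists>s\<in>signs4. Q = sign_act s P"
proof -
  obtain x y where xy: "(x, y) \<in> plucker_pairs" and P_eq: "P = plucker_proj x y"
    using P unfolding grassmann42_eq_plucker_image by auto
  obtain x' y' where xy': "(x', y') \<in> plucker_pairs" and Q_eq: "Q = plucker_proj x' y'"
    using Q unfolding grassmann42_eq_plucker_image by auto
  define nP nQ where "nP = sqrt (\<Sum>k\<le>4. (orbit_coords P k)^2)" and "nQ = sqrt (\<Sum>k\<le>4. (orbit_coords Q k)^2)"
  have "0 < nP" "0 < nQ"
    using orbit_coords_norm_pos P Q by (simp_all add: nP_def nQ_def)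
  have "orbit_coords Q k = nQ / nP * orbit_coords P k" for k
    using fun_cong[OF eq, of k] \<open>0 < nP\<close> \<open>0 < nQ\<close>
    by (simp add: orbit_map_def nP_def[symmetric] nQ_def[symmetric] field_simps)
  then obtain h \<rho> where "h \<in> {1, -1}" "\<forall>k. \<rho>$k \<in> {1, -1}"
    and "x' = (\<chi> k. \<rho>$k * x$k)" "y' = (\<chi> k. h * \<rho>$k * y$k)"
    using plucker_pairs_sign_related_if_coords_scaled[OF xy xy', of "nQ / nP"] \<open>0 < nP\<close> \<open>0 < nQ\<close>
    by (auto simp: P_eq Q_eq orbit_coords_plucker_proj xy xy')
  then show ?thesis
    using plucker_proj_sign_related by (simp add: P_eq Q_eq)
qed

lemma orbit_map_onto:
  assumes "w \<in> topspace (nsphere 4)"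
  shows "\<exists>P\<in>grassmann42. orbit_map P = w"
proof -
  have unit: "(\<Sum>k\<le>4. (w k)^2) = 1" and zero: "\<And>k. 4 < k \<Longrightarrow> w k = 0"
    using assms by (auto simp: nsphere)
  obtain x y t where xy: "(x, y) \<in> plucker_pairs" and "0 < t"
    and coords: "\<And>k. k \<le> 4 \<Longrightarrow> square_coords (odd_coords x y) (even_coords x y) k = t * w k"
    using square_coords_plucker_pairs_onto[OF unit] by blast
  define P where "P = plucker_proj x y"
  have scaled: "orbit_coords P k = t * w k" for k
    using coords[of k] zero[of k] by (cases "k \<le> 4") (simp_all add: P_def orbit_coords_plucker_proj xy square_coords_def)
  have "sqrt (\<Sum>k\<le>4. (orbit_coords P k)^2) = t"
    using unit \<open>0 < t\<close> by (simp add: scaled power_mult_distrib flip: sum_distrib_left)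
  then have "orbit_map P = w"
    using \<open>0 < t\<close> by (simp add: orbit_map_def scaled fun_eq_iff)
  moreover have "P \<in> grassmann42"
    unfolding P_def by (rule plucker_proj_in_grassmann42[OF xy])
  ultimately show ?thesis
    by blast
qed

lemma orbit_map_in_nsphere:
  assumes "P \<in> grassmann42"
  shows "orbit_map P \<in> topspace (nsphere 4)"
proof -
  have pos: "0 < sqrt (\<Sum>k\<le>4. (orbit_coords P k)^2)"
    by (rule orbit_coords_norm_pos[OF assms])
  have "(\<Sum>k\<le>4. (orbit_map P k)^2) = (\<Sum>k\<le>4. (orbit_coords P k)^2) / (sqrt (\<Sum>k\<le>4. (orbit_coords P k)^2))^2"
    by (simp add: orbit_map_def power_divide sum_divide_distrib)
  also have "\<dots> = 1"
    using pos by (simp add: sum_nonneg)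
  finally show ?thesis
    by (simp add: nsphere orbit_map_def orbit_coords_def square_coords_def)
qed

lemma continuous_on_orbit_coords: "continuous_on S (\<lambda>P. orbit_coords P k)"
proof -
  have entry: "continuous_on S (\<lambda>P::real^4^4. P $ i $ j)" for i j
    by (intro continuous_on_component continuous_on_id)
  consider "k = 0" | "k = 1" | "k = 2" | "k = 3" | "k = 4" | "4 < k"
    by linarith
  then show ?thesis
    by cases (simp_all add: orbit_coords_def square_coords_def odd_inv_def even_inv_def entry continuous_intros)
qed

lemma continuous_map_orbit_map: "continuous_map G42 (nsphere 4) orbit_map"
  unfolding nsphere continuous_map_in_subtopology
proof
  have "sqrt (\<Sum>j\<le>4. (orbit_coords P j)^2) \<noteq> 0" if "P \<in> grassmann42" for P
    using orbit_coords_norm_pos[OF that] by simp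
  then have "continuous_on grassmann42 (\<lambda>P. orbit_map P k)" for k
    unfolding orbit_map_def by (intro continuous_intros continuous_on_orbit_coords) blast
  then show "continuous_map G42 (powertop_real UNIV) orbit_map"
    by (simp add: continuous_map_componentwise_UNIV G42_def)
  show "orbit_map \<in> topspace G42 \<rightarrow> {x. (\<Sum>i\<le>4. (x i)^2) = 1 \<and> (\<forall>i>4. x i = 0)}"
    using orbit_map_in_nsphere by (auto simp: G42_def nsphere)
qed

theorem mainTheorem16:
  shows "orbit_space G42 signs4 sign_act homeomorphic_space nsphere 4"
  unfolding orbit_space_def
proof (rule quotient_topology_homeomorphic_space[where f = orbit_map])
  show "compact_space G42"
    using compact_grassmann42 by (simp add: G42_def compact_space_def compactin_subtopology)
  show "Hausdorff_space (nsphere 4)"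
    unfolding nsphere by (intro Hausdorff_space_subtopology) (simp add: Hausdorff_space_product_topology)
  show "continuous_map G42 (nsphere 4) orbit_map"
    by (rule continuous_map_orbit_map)
  show "orbit_map ` topspace G42 = topspace (nsphere 4)"
    using orbit_map_in_nsphere orbit_map_onto by (auto simp: G42_def)
  show "orbit_map P = orbit_map Q \<longleftrightarrow> orbit signs4 sign_act P = orbit signs4 sign_act Q"
    if "P \<in> topspace G42" "Q \<in> topspace G42" for P Q
    using that orbit_map_eq_imp_sign_related orbit_map_sign_act
    unfolding orbit_sign_act_eq_iff G42_def by auto
qed

end
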